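(* Let $\chi\in C(\mathbb{T}^d)$ be a viscosity subsolution of $\bar c+H(x,D\chi(x))=0$ on $\mathbb{T}^d$, and let $(\gamma,u)$ be a trajectory-control pair on $\mathbb{R}$ such that $\gamma$ is calibrated for $\chi$. Then for every $\tau>0$, $$\bar c+L^*(\gamma(\tau),p)=0\qquad\text{for all }p\in D^+_F\chi(\gamma(\tau)).$$
   Context: Setting: $1\le m\le d$, $\mathbb{T}^d=\mathbb{R}^d/\mathbb{Z}^d$; $f_1,\dots,f_m$ smooth vector fields satisfying the Hörmander condition; $F(x)=[f_1(x)|\cdots|f_m(x)]$, (F): $F\in C^{1,1}$, rank $F(x)=m$. Trajectory-control pairs: $\gamma$ locally absolutely continuous, $u\in L^2_{loc}$, $\dot\gamma=F(\gamma)u$ a.e. (L): $L\in C^2(\mathbb{T}^d\times\mathbb{R}^m)$, $D^2_uL\ge0$, $L(x,u)\ge K_1|u|^\sigma-K_2$ ($\sigma>1$). $L^*(x,q)=\sup_{u\in\mathbb{R}^m}\{\langle q,u\rangle-L(x,u)\}$ for $q\in\mathbb{R}^m$, and $H(x,p)=L^*(x,F^*(x)p)$. (S): no singular minimizing controls other than zero for $V^T(x)=\inf\{\int_0^TL(\gamma,u):\gamma(0)=x\}$; $\bar c=\lim_{T\to\infty}V^T(x)/T$ is the critical constant. A pair $(\gamma,u)$ on an interval $I$ is calibrated for $\chi$ if $\chi(\gamma(b))-\chi(\gamma(a))=\int_a^bL(\gamma,u)\,ds-\bar c(b-a)$ for all $a<b$ in $I$. $D^+\chi(x)$ denotes the (Fréchet)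 superdifferential of $\chi$ at $x$, and $D^+_F\chi(x)=F^*(x)D^+\chi(x)\subset\mathbb{R}^m$. Assumptions (F), (L), (S) are in force. *)

theory Defs
  imports "HOL-Analysis.Analysis"
begin

section \<open>Torus: functions on R^d that are Z^d-periodic\<close>

definition int_vec :: "real^'d \<Rightarrow> bool" where
  "int_vec z \<longleftrightarrow> (\<forall>i. z $ i \<in> \<int>)"

definition torus_periodic :: "(real^'d \<Rightarrow> 'b) \<Rightarrow> bool" where
  "torus_periodic g \<longleftrightarrow> (\<forall>x z. int_vec z \<longrightarrow> g (x + z) = g x)"

coinductive smooth_real :: "('a::real_normed_vector \<Rightarrow> real) \<Rightarrow> bool" where
  "(\<forall>x. g differentiable (at x)) \<Longrightarrow>
   (\<forall>v. smooth_real (\<lambda>x. frechet_derivative g (at x) v)) \<Longrightarrow> smooth_real g"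

definition smooth_vf :: "(real^'d \<Rightarrow> real^'d) \<Rightarrow> bool" where
  "smooth_vf X \<longleftrightarrow> (\<forall>i. smooth_real (\<lambda>x. X x $ i))"

definition lie_bracket :: "(real^'d \<Rightarrow> real^'d) \<Rightarrow> (real^'d \<Rightarrow> real^'d) \<Rightarrow> real^'d \<Rightarrow> real^'d" where
  "lie_bracket X Y x = frechet_derivative Y (at x) (X x) - frechet_derivative X (at x) (Y x)"

inductive_set lie_gen :: "('m \<Rightarrow> real^'d \<Rightarrow> real^'d) \<Rightarrow> (real^'d \<Rightarrow> real^'d) set"
  for f where
  base: "f j \<in> lie_gen f"
| brk: "X \<in> lie_gen f \<Longrightarrow> Y \<in> lie_gen f \<Longrightarrow> lie_bracket X Y \<in> lie_gen f"

definition hoermander :: "('m \<Rightarrow> real^'d \<Rightarrow> real^'d) \<Rightarrow> bool" where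
  "hoermander f \<longleftrightarrow> (\<forall>x. span {X x | X. X \<in> lie_gen f} = UNIV)"

definition Fmat :: "('m \<Rightarrow> real^'d \<Rightarrow> real^'d) \<Rightarrow> real^'d \<Rightarrow> real^'m^'d" where
  "Fmat f x = (\<chi> i j. f j x $ i)"

definition assm_F :: "('m::finite \<Rightarrow> real^'d::finite \<Rightarrow> real^'d) \<Rightarrow> bool" where
  "assm_F f \<longleftrightarrow>
     (\<exists>DF :: (real^'d) \<Rightarrow> ((real^'d) \<Rightarrow>\<^sub>L (real^'m^'d)).
        (\<forall>x. (Fmat f has_derivative blinfun_apply (DF x)) (at x)) \<and>
        (\<exists>K. \<forall>x y. norm (DF x - DF y) \<le> K * norm (x - y))) \<and>
     (\<forall>x. rank (Fmat f x) = CARD('m))"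

definition assm_L :: "(real^'d::finite \<Rightarrow> real^'m::finite \<Rightarrow> real) \<Rightarrow> bool" where
  "assm_L L \<longleftrightarrow>
     (\<forall>u. torus_periodic (\<lambda>x. L x u)) \<and>
     (\<exists>(D1 :: ((real^'d) \<times> (real^'m)) \<Rightarrow> (((real^'d) \<times> (real^'m)) \<Rightarrow>\<^sub>L real))
        (D2 :: ((real^'d) \<times> (real^'m)) \<Rightarrow> (((real^'d) \<times> (real^'m)) \<Rightarrow>\<^sub>L (((real^'d) \<times> (real^'m)) \<Rightarrow>\<^sub>L real))).
        (\<forall>z. ((\<lambda>(x, u). L x u) has_derivative blinfun_apply (D1 z)) (at z)) \<and>
        (\<forall>z. (D1 has_derivative blinfun_apply (D2 z)) (at z)) \<and>
        continuous_on UNIV D2 \<and>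
        (\<forall>x u v. blinfun_apply (blinfun_apply (D2 (x, u)) (0, v)) (0, v) \<ge> 0)) \<and>
     (\<exists>K1 K2 \<sigma>. K1 > 0 \<and> \<sigma> > 1 \<and> (\<forall>x u. L x u \<ge> K1 * norm u powr \<sigma> - K2))"

definition Lstar :: "(real^'d \<Rightarrow> real^'m \<Rightarrow> real) \<Rightarrow> real^'d \<Rightarrow> real^'m \<Rightarrow> real" where
  "Lstar L x q = (SUP u. q \<bullet> u - L x u)"

definition Ham :: "('m \<Rightarrow> real^'d \<Rightarrow> real^'d) \<Rightarrow> (real^'d \<Rightarrow> real^'m \<Rightarrow> real)
                   \<Rightarrow> real^'d \<Rightarrow> real^'d \<Rightarrow> real" where
  "Ham f L x p = Lstar L x (transpose (Fmat f x) *v p)"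

definition abs_cont_on :: "(real \<Rightarrow> 'a::real_normed_vector) \<Rightarrow> real \<Rightarrow> real \<Rightarrow> bool" where
  "abs_cont_on g a b \<longleftrightarrow>
     (\<forall>\<epsilon>>0. \<exists>\<delta>>0. \<forall>n (s::nat \<Rightarrow> real) t.
        (\<forall>k<n. a \<le> s k \<and> s k \<le> t k \<and> t k \<le> b) \<and>
        (\<forall>k<n. \<forall>l<n. k \<noteq> l \<longrightarrow> t k \<le> s l \<or> t l \<le> s k) \<and>
        (\<Sum>k<n. t k - s k) < \<delta> \<longrightarrow>
        (\<Sum>k<n. norm (g (t k) - g (s k))) < \<epsilon>)"

definition loc_abs_cont :: "(real \<Rightarrow> 'a::real_normed_vector) \<Rightarrow> real set \<Rightarrow> bool" where
  "loc_abs_cont g I \<longleftrightarrow> (\<forall>a b. {a..b} \<subseteq> I \<longrightarrow> abs_cont_on g a b)"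

definition L2_loc :: "(real \<Rightarrow> 'a::euclidean_space) \<Rightarrow> real set \<Rightarrow> bool" where
  "L2_loc u I \<longleftrightarrow> u \<in> borel_measurable (lebesgue_on I) \<and>
     (\<forall>a b. {a..b} \<subseteq> I \<longrightarrow> integrable (lebesgue_on {a..b}) (\<lambda>t. norm (u t) ^ 2))"

definition tc_pair :: "('m::finite \<Rightarrow> real^'d::finite \<Rightarrow> real^'d) \<Rightarrow> real set
                       \<Rightarrow> (real \<Rightarrow> real^'d) \<Rightarrow> (real \<Rightarrow> real^'m) \<Rightarrow> bool" where
  "tc_pair f I \<gamma> u \<longleftrightarrow> loc_abs_cont \<gamma> I \<and> L2_loc u I \<and>
     (AE t in lebesgue. t \<in> I \<longrightarrow> (\<gamma> has_vector_derivative (Fmat f (\<gamma> t) *v u t)) (at t))"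

text \<open>Action integral; L is bounded below, so a non-integrable action is +infinity.\<close>
definition action :: "(real^'d \<Rightarrow> real^'m \<Rightarrow> real) \<Rightarrow> (real \<Rightarrow> real^'d) \<Rightarrow> (real \<Rightarrow> real^'m)
                      \<Rightarrow> real \<Rightarrow> real \<Rightarrow> ereal" where
  "action L \<gamma> u a b =
     (if integrable (lebesgue_on {a..b}) (\<lambda>s. L (\<gamma> s) (u s))
      then ereal (integral\<^sup>L (lebesgue_on {a..b}) (\<lambda>s. L (\<gamma> s) (u s))) else \<infinity>)"

definition value_fun :: "('m::finite \<Rightarrow> real^'d::finite \<Rightarrow> real^'d) \<Rightarrow> (real^'d \<Rightarrow> real^'m \<Rightarrow> real)
                         \<Rightarrow> real \<Rightarrow> real^'d \<Rightarrow> ereal" where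
  "value_fun f L T x = (INF (\<gamma>, u) \<in> {(\<gamma>, u). tc_pair f {0..T} \<gamma> u \<and> \<gamma> 0 = x}. action L \<gamma> u 0 T)"

text \<open>Critical constant: lim_{T->oo} V^T(x)/T (independent of x; we take x = 0).\<close>
definition crit_const :: "('m::finite \<Rightarrow> real^'d::finite \<Rightarrow> real^'d) \<Rightarrow> (real^'d \<Rightarrow> real^'m \<Rightarrow> real) \<Rightarrow> real" where
  "crit_const f L = Lim at_top (\<lambda>T. real_of_ereal (value_fun f L T 0) / T)"

text \<open>The differential of the end-point map u |-> gamma_u(T) (initial point fixed) at u,
  applied to v, is xi(T) where xi solves the linearised system
  xi' = D_x(F(gamma)u) xi + F(gamma) v, xi(0) = 0.  u is singular iff this is not onto.\<close>
definition singular_control :: "('m::finite \<Rightarrow> real^'d::finite \<Rightarrow> real^'d) \<Rightarrow> real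
                                \<Rightarrow> (real \<Rightarrow> real^'d) \<Rightarrow> (real \<Rightarrow> real^'m) \<Rightarrow> bool" where
  "singular_control f T \<gamma> u \<longleftrightarrow>
     {\<xi> T | \<xi> v. L2_loc v {0..T} \<and> abs_cont_on \<xi> 0 T \<and> \<xi> 0 = 0 \<and>
        (AE t in lebesgue. t \<in> {0..T} \<longrightarrow>
          (\<xi> has_vector_derivative
             (frechet_derivative (\<lambda>y. Fmat f y *v u t) (at (\<gamma> t)) (\<xi> t) + Fmat f (\<gamma> t) *v v t)) (at t))}
     \<noteq> UNIV"

definition assm_S :: "('m::finite \<Rightarrow> real^'d::finite \<Rightarrow> real^'d) \<Rightarrow> (real^'d \<Rightarrow> real^'m \<Rightarrow> real) \<Rightarrow> bool" where
  "assm_S f L \<longleftrightarrow> (\<forall>T>0. \<forall>x \<gamma> u.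
     tc_pair f {0..T} \<gamma> u \<and> \<gamma> 0 = x \<and> action L \<gamma> u 0 T = value_fun f L T x \<and>
     singular_control f T \<gamma> u \<longrightarrow> negligible {t \<in> {0..T}. u t \<noteq> 0})"

definition calibrated :: "('m::finite \<Rightarrow> real^'d::finite \<Rightarrow> real^'d) \<Rightarrow> (real^'d \<Rightarrow> real^'m \<Rightarrow> real)
                         \<Rightarrow> (real^'d \<Rightarrow> real) \<Rightarrow> real set \<Rightarrow> (real \<Rightarrow> real^'d) \<Rightarrow> (real \<Rightarrow> real^'m) \<Rightarrow> bool" where
  "calibrated f L chi I \<gamma> u \<longleftrightarrow> (\<forall>a\<in>I. \<forall>b\<in>I. a < b \<longrightarrow>
     action L \<gamma> u a b = ereal (chi (\<gamma> b) - chi (\<gamma> a) + crit_const f L * (b - a)))"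

definition C1_fun :: "(real^'d::finite \<Rightarrow> real) \<Rightarrow> bool" where
  "C1_fun \<phi> \<longleftrightarrow> (\<exists>D :: (real^'d) \<Rightarrow> ((real^'d) \<Rightarrow>\<^sub>L real).
     (\<forall>y. (\<phi> has_derivative blinfun_apply (D y)) (at y)) \<and> continuous_on UNIV D)"

definition visc_subsol :: "real \<Rightarrow> (real^'d::finite \<Rightarrow> real^'d \<Rightarrow> real) \<Rightarrow> (real^'d \<Rightarrow> real) \<Rightarrow> bool" where
  "visc_subsol c H chi \<longleftrightarrow> continuous_on UNIV chi \<and>
     (\<forall>\<phi> x p. C1_fun \<phi> \<and> (\<phi> has_derivative (\<lambda>h. p \<bullet> h)) (at x) \<and>
        (\<exists>r>0. \<forall>y. dist y x < r \<longrightarrow> chi y - \<phi> y \<le> chi x - \<phi> x) \<longrightarrow>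
        c + H x p \<le> 0)"

definition superdiff :: "(real^'d::finite \<Rightarrow> real) \<Rightarrow> real^'d \<Rightarrow> (real^'d) set" where
  "superdiff chi x = {p. \<forall>\<epsilon>>0. \<exists>\<delta>>0. \<forall>y. norm (y - x) < \<delta> \<longrightarrow>
       chi y - chi x - p \<bullet> (y - x) \<le> \<epsilon> * norm (y - x)}"

definition superdiff_F :: "('m::finite \<Rightarrow> real^'d::finite \<Rightarrow> real^'d) \<Rightarrow> (real^'d \<Rightarrow> real) \<Rightarrow> real^'d \<Rightarrow> (real^'m) set" where
  "superdiff_F f chi x = (\<lambda>p. transpose (Fmat f x) *v p) ` superdiff chi x"

end

theory Submission
  imports Defs
begin

text \<open>
  Let \<open>x = \<gamma> \<tau>\<close>, \<open>p \<in> D\<^sup>+\<chi>(x)\<close> and \<open>q = F(x)\<^sup>T p\<close>.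
  The inequality \<open>c + L\<^sup>*(x, q) \<le> 0\<close> holds for every superdifferential of a viscosity
  subsolution: \<open>\<chi>\<close> is touched from above by \<open>p \<cdot> y + k |y - x|\<^sup>2\<close> at points \<open>y\<close> arbitrarily close
  to \<open>x\<close>, with gradients close to \<open>p\<close>, and \<open>c + (F(y)\<^sup>T p') \<cdot> v - L(y, v) \<le> 0\<close> passes to the
  limit for each fixed \<open>v\<close>.

  The reverse inequality comes from calibration. If \<open>c + L\<^sup>*(x, q) < 0\<close>, superlinearity makes
  \<open>L(y, v) \<ge> q' \<cdot> v + \<eta> |v| + c + \<delta>\<close> uniformly in \<open>v\<close> for \<open>(y, q')\<close> near \<open>(x, q)\<close>. Integrating
  along \<open>\<gamma>\<close> over a short interval \<open>[\<tau>, b]\<close> gives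
  \<open>\<chi>(\<gamma> b) - \<chi>(x) \<ge> p \<cdot> (\<gamma> b - x) + \<eta> \<integral>|u| + \<delta> (b - \<tau>)\<close>, while the superdifferential
  gives \<open>\<chi>(\<gamma> b) - \<chi>(x) - p \<cdot> (\<gamma> b - x) \<le> \<epsilon> |\<gamma> b - x| \<le> \<epsilon> C \<integral>|u| = \<eta> \<integral>|u|\<close>.
  Integrating along \<open>\<gamma>\<close> needs the fundamental theorem of calculus for absolutely continuous
  functions, which is obtained from the Henstock--Kurzweil integral.
\<close>

hide_const (open) Polynomial.content

section \<open>Absolutely continuous functions\<close>

lemma abs_cont_on_finite_familyE:
  fixes g :: "real \<Rightarrow> 'a::real_normed_vector"
  assumes ac: "abs_cont_on g a b" and e: "e > 0"
  obtains \<delta> where "\<delta> > 0"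
    "\<And>D. finite D \<Longrightarrow> (\<And>s t. (s,t) \<in> D \<Longrightarrow> a \<le> s \<and> s \<le> t \<and> t \<le> b) \<Longrightarrow>
       (\<And>s t s' t'. (s,t) \<in> D \<Longrightarrow> (s',t') \<in> D \<Longrightarrow> (s,t) \<noteq> (s',t') \<Longrightarrow> t \<le> s' \<or> t' \<le> s) \<Longrightarrow>
       (\<Sum>(s,t)\<in>D. t - s) < \<delta> \<Longrightarrow> (\<Sum>(s,t)\<in>D. norm (g t - g s)) < e"
proof -
  obtain \<delta> where d: "\<delta> > 0" and H: "\<And>n (s::nat \<Rightarrow> real) t.
        (\<forall>k<n. a \<le> s k \<and> s k \<le> t k \<and> t k \<le> b) \<and>
        (\<forall>k<n. \<forall>l<n. k \<noteq> l \<longrightarrow> t k \<le> s l \<or> t l \<le> s k) \<and>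
        (\<Sum>k<n. t k - s k) < \<delta> \<longrightarrow>
        (\<Sum>k<n. norm (g (t k) - g (s k))) < e"
    using ac[unfolded abs_cont_on_def, rule_format, OF e] by blast
  show ?thesis
  proof (rule that[OF d])
    fix D :: "(real \<times> real) set"
    assume fin: "finite D" and D1: "\<And>s t. (s,t) \<in> D \<Longrightarrow> a \<le> s \<and> s \<le> t \<and> t \<le> b"
      and D2: "\<And>s t s' t'. (s,t) \<in> D \<Longrightarrow> (s',t') \<in> D \<Longrightarrow> (s,t) \<noteq> (s',t') \<Longrightarrow> t \<le> s' \<or> t' \<le> s"
      and D3: "(\<Sum>(s,t)\<in>D. t - s) < \<delta>"
    obtain h where h: "bij_betw h {..<card D} D"
      using ex_bij_betw_nat_finite[OF fin] by (auto simp: atLeast0LessThan)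
    have hin: "k < card D \<Longrightarrow> h k \<in> D" for k using h by (auto simp: bij_betw_def)
    have hinj: "k < card D \<Longrightarrow> l < card D \<Longrightarrow> k \<noteq> l \<Longrightarrow> h k \<noteq> h l" for k l
      using h by (auto simp: bij_betw_def inj_on_def)
    have "(\<Sum>k<card D. norm (g (snd (h k)) - g (fst (h k)))) < e"
    proof (rule H[rule_format], intro conjI allI impI)
      fix k assume "k < card D"
      then show "a \<le> fst (h k)" "fst (h k) \<le> snd (h k)" "snd (h k) \<le> b"
        using D1[of "fst (h k)" "snd (h k)"] hin by auto
    next
      fix k l assume "k < card D" "l < card D" "k \<noteq> l"
      then show "snd (h k) \<le> fst (h l) \<or> snd (h l) \<le> fst (h k)"
        using D2[of "fst (h k)" "snd (h k)" "fst (h l)" "snd (h l)"] hin hinj by auto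
    next
      show "(\<Sum>k<card D. snd (h k) - fst (h k)) < \<delta>"
        using D3 sum.reindex_bij_betw[OF h, of "\<lambda>(s,t). t - s"] by (simp add: case_prod_beta)
    qed
    then show "(\<Sum>(s,t)\<in>D. norm (g t - g s)) < e"
      using sum.reindex_bij_betw[OF h, of "\<lambda>(s,t). norm (g t - g s)"] by (simp add: case_prod_beta)
  qed
qed

lemma loc_abs_cont_imp_continuous_on:
  fixes g :: "real \<Rightarrow> 'a::real_normed_vector"
  assumes "loc_abs_cont g UNIV"
  shows "continuous_on UNIV g"
proof -
  have "isCont g x" for x
    unfolding continuous_at_eps_delta
  proof (intro allI impI)
    fix e :: real assume "e > 0"
    have "abs_cont_on g (x - 1) (x + 1)" using assms by (auto simp: loc_abs_cont_def)
    then obtain \<delta> where \<delta>: "\<delta> > 0" and H: "\<And>n (s::nat \<Rightarrow> real) t.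
        (\<forall>k<n. x - 1 \<le> s k \<and> s k \<le> t k \<and> t k \<le> x + 1) \<and>
        (\<forall>k<n. \<forall>l<n. k \<noteq> l \<longrightarrow> t k \<le> s l \<or> t l \<le> s k) \<and>
        (\<Sum>k<n. t k - s k) < \<delta> \<longrightarrow>
        (\<Sum>k<n. norm (g (t k) - g (s k))) < e"
      using \<open>e > 0\<close> unfolding abs_cont_on_def by blast
    have "dist (g y) (g x) < e" if y: "dist y x < min 1 \<delta>" for y
    proof (cases "x \<le> y")
      case True
      then show ?thesis
        using H[of 1 "\<lambda>_. x" "\<lambda>_. y"] y by (auto simp: dist_real_def dist_norm)
    next
      case False
      then show ?thesis
        using H[of 1 "\<lambda>_. y" "\<lambda>_. x"] y by (auto simp: dist_real_def dist_norm norm_minus_commute)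
    qed
    then show "\<exists>d>0. \<forall>y. dist y x < d \<longrightarrow> dist (g y) (g x) < e"
      using \<delta> by (intro exI[of _ "min 1 \<delta>"]) auto
  qed
  then show ?thesis by (simp add: continuous_on_eq_continuous_at)
qed

lemma tagged_division_1_nonoverlapping:
  fixes a b :: real
  assumes p: "p tagged_division_of {a..b}"
    and xK: "(x, K) \<in> p" and yK': "(y, K') \<in> p" and ne: "(x, K) \<noteq> (y, K')"
    and K: "content K \<noteq> 0" and K': "content K' \<noteq> 0"
  shows "Sup K \<le> Inf K' \<or> Sup K' \<le> Inf K"
proof -
  obtain u v where "K = {u..v}"
    using tagged_division_ofD(4)[OF p xK] by (auto simp: cbox_interval)
  with K have uv: "K = {u..v}" "u < v" by (auto split: if_splits)
  obtain u' v' where "K' = {u'..v'}"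
    using tagged_division_ofD(4)[OF p yK'] by (auto simp: cbox_interval)
  with K' have uv': "K' = {u'..v'}" "u' < v'" by (auto split: if_splits)
  have "{u<..<v} \<inter> {u'<..<v'} = {}"
    using tagged_division_ofD(5)[OF p xK yK' ne] uv uv' by simp
  then have "v \<le> u' \<or> v' \<le> u"
    using uv(2) uv'(2) dense[of "max u u'" "min v v'"] by (auto simp: max_def min_def split: if_splits)
  then show ?thesis using uv uv' by auto
qed

lemma tagged_division_1_interval:
  fixes a b :: real
  assumes p: "p tagged_division_of {a..b}" and xK: "(x, K) \<in> p"
  shows "y \<in> K \<longleftrightarrow> Inf K \<le> y \<and> y \<le> Sup K" "a \<le> Inf K" "Inf K \<le> x" "x \<le> Sup K" "Sup K \<le> b"
    "content K = Sup K - Inf K" "measure lebesgue K = Sup K - Inf K" "K \<in> lmeasurable"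
proof -
  obtain u v where K: "K = {u..v}"
    using tagged_division_ofD(4)[OF p xK] by (auto simp: cbox_interval)
  moreover have "x \<in> K" "K \<subseteq> {a..b}" using tagged_division_ofD(2,3)[OF p xK] by auto
  ultimately show "y \<in> K \<longleftrightarrow> Inf K \<le> y \<and> y \<le> Sup K" "a \<le> Inf K" "Inf K \<le> x" "x \<le> Sup K" "Sup K \<le> b"
    "content K = Sup K - Inf K" "measure lebesgue K = Sup K - Inf K" "K \<in> lmeasurable"
    by auto
qed

lemma tagged_division_1_measure_Union:
  fixes a b :: real
  assumes p: "p tagged_division_of {a..b}" and qp: "q \<subseteq> p"
  shows "measure lebesgue (\<Union>(snd ` q)) = (\<Sum>(x, K)\<in>q. content K)"
proof -
  have fin: "finite q" using tagged_division_ofD(1)[OF p] qp by (rule finite_subset[rotated])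
  have K: "y \<in> snd xK \<longleftrightarrow> Inf (snd xK) \<le> y \<and> y \<le> Sup (snd xK)"
    "content (snd xK) = Sup (snd xK) - Inf (snd xK)"
    "measure lebesgue (snd xK) = Sup (snd xK) - Inf (snd xK)" "snd xK \<in> lmeasurable"
    if "xK \<in> q" for xK y
    using tagged_division_1_interval[OF p, of "fst xK" "snd xK"] that qp by auto
  have "pairwise (\<lambda>xK yL. negligible (snd xK \<inter> snd yL)) q"
  proof (rule pairwiseI)
    fix xK yL assume xy: "xK \<in> q" "yL \<in> q" "xK \<noteq> yL"
    \<comment> \<open>a degenerate interval is a point; two proper ones meet at most in an endpoint\<close>
    have "(fst xK, snd xK) \<in> p" "(fst yL, snd yL) \<in> p" "(fst xK, snd xK) \<noteq> (fst yL, snd yL)"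
      using xy qp by auto
    from tagged_division_1_nonoverlapping[OF p this]
    have "Sup (snd xK) \<le> Inf (snd yL) \<or> Sup (snd yL) \<le> Inf (snd xK) \<or>
        Sup (snd xK) = Inf (snd xK) \<or> Sup (snd yL) = Inf (snd yL)"
      using K(2)[OF xy(1)] K(2)[OF xy(2)] by auto
    then have "snd xK \<inter> snd yL \<subseteq> {Sup (snd xK), Sup (snd yL)}"
      using xy by (auto simp: K(1)[of xK] K(1)[of yL])
    then show "negligible (snd xK \<inter> snd yL)"
      by (rule negligible_subset[rotated]) simp
  qed
  then have "measure lebesgue (\<Union>(snd ` q)) = (\<Sum>xK\<in>q. measure lebesgue (snd xK))"
    using fin K(4) by (intro measure_negligible_finite_Union_image) auto
  also have "\<dots> = (\<Sum>(x, K)\<in>q. content K)"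
    using K(2,3) by (auto simp: case_prod_beta intro!: sum.cong)
  finally show ?thesis .
qed

lemma abs_cont_on_tagged_subdivision:
  fixes \<psi> :: "real \<Rightarrow> 'a::real_normed_vector"
  assumes ac: "abs_cont_on \<psi> a b" and e: "e > 0"
  obtains \<delta> where "\<delta> > 0"
    "\<And>p q. p tagged_division_of {a..b} \<Longrightarrow> q \<subseteq> p \<Longrightarrow> measure lebesgue (\<Union>(snd ` q)) < \<delta> \<Longrightarrow>
       (\<Sum>(x, K)\<in>q. norm (\<psi> (Sup K) - \<psi> (Inf K))) < e"
proof -
  obtain \<delta> where \<delta>: "\<delta> > 0" and small: "\<And>D. finite D \<Longrightarrow> (\<And>s t. (s,t) \<in> D \<Longrightarrow> a \<le> s \<and> s \<le> t \<and> t \<le> b) \<Longrightarrow>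
       (\<And>s t s' t'. (s,t) \<in> D \<Longrightarrow> (s',t') \<in> D \<Longrightarrow> (s,t) \<noteq> (s',t') \<Longrightarrow> t \<le> s' \<or> t' \<le> s) \<Longrightarrow>
       (\<Sum>(s,t)\<in>D. t - s) < \<delta> \<Longrightarrow> (\<Sum>(s,t)\<in>D. norm (\<psi> t - \<psi> s)) < e"
    using abs_cont_on_finite_familyE[OF ac e] by blast
  show ?thesis
  proof (rule that[OF \<delta>])
    fix p q
    assume p: "p tagged_division_of {a..b}" and qp: "q \<subseteq> p"
      and meas: "measure lebesgue (\<Union>(snd ` q)) < \<delta>"
    have fin: "finite q" using tagged_division_ofD(1)[OF p] qp by (rule finite_subset[rotated])
    \<comment> \<open>degenerate intervals contribute nothing; without them the endpoints determine the tagged interval\<close>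
    define q' where "q' = {xK \<in> q. Inf (snd xK) \<noteq> Sup (snd xK)}"
    define ends where "ends xK = (Inf (snd xK), Sup (snd xK))" for xK :: "real \<times> real set"
    have K: "a \<le> Inf (snd xK)" "Inf (snd xK) \<le> Sup (snd xK)" "Sup (snd xK) \<le> b"
      "content (snd xK) = Sup (snd xK) - Inf (snd xK)" "snd xK \<in> lmeasurable"
      if "xK \<in> q" for xK
      using tagged_division_1_interval[OF p, of "fst xK" "snd xK"] that qp by auto
    have fin': "finite q'" using fin by (simp add: q'_def)
    have order: "Sup (snd xK) \<le> Inf (snd yL) \<or> Sup (snd yL) \<le> Inf (snd xK)"
      if "xK \<in> q'" "yL \<in> q'" "xK \<noteq> yL" for xK yL
      using that qp K(4) tagged_division_1_nonoverlapping[OF p, of "fst xK" "snd xK" "fst yL" "snd yL"]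
      by (auto simp: q'_def)
    have inj: "inj_on ends q'"
    proof (rule inj_onI)
      fix xK yL assume "xK \<in> q'" "yL \<in> q'" "ends xK = ends yL"
      with order[of xK yL] K(2)[of xK] show "xK = yL"
        by (force simp: ends_def q'_def)
    qed
    have "(\<Sum>(x, K)\<in>q. norm (\<psi> (Sup K) - \<psi> (Inf K))) = (\<Sum>(x, K)\<in>q'. norm (\<psi> (Sup K) - \<psi> (Inf K)))"
      using fin by (intro sum.mono_neutral_right) (auto simp: q'_def)
    also have "\<dots> = (\<Sum>(s,t)\<in>ends ` q'. norm (\<psi> t - \<psi> s))"
      by (subst sum.reindex[OF inj]) (simp add: ends_def case_prod_beta)
    also have "\<dots> < e"
    proof (rule small)
      show "finite (ends ` q')" using fin' by simp
      show "a \<le> s \<and> s \<le> t \<and> t \<le> b" if "(s, t) \<in> ends ` q'" for s t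
        using that K(1-3) by (force simp: ends_def q'_def)
      show "t \<le> s' \<or> t' \<le> s" if "(s, t) \<in> ends ` q'" "(s', t') \<in> ends ` q'" "(s, t) \<noteq> (s', t')"
        for s t s' t'
        using that order by (force simp: ends_def)
      have "(\<Sum>(s,t)\<in>ends ` q'. t - s) = (\<Sum>(x, K)\<in>q'. content K)"
        using K(4) by (subst sum.reindex[OF inj]) (auto simp: ends_def q'_def case_prod_beta intro!: sum.cong)
      also have "\<dots> = measure lebesgue (\<Union>(snd ` q'))"
        using qp by (intro tagged_division_1_measure_Union[OF p, symmetric]) (auto simp: q'_def)
      also have "\<dots> \<le> measure lebesgue (\<Union>(snd ` q))"
        using fin K(5) by (intro measure_mono_fmeasurable) (auto simp: q'_def)
      finally show "(\<Sum>(s,t)\<in>ends ` q'. t - s) < \<delta>" using meas by simp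
    qed
    finally show "(\<Sum>(x, K)\<in>q. norm (\<psi> (Sup K) - \<psi> (Inf K))) < e" .
  qed
qed

lemma interval_increment_approx:
  fixes \<psi> :: "real \<Rightarrow> 'a::real_normed_vector"
  assumes "u \<le> x" "x \<le> v"
    and approx: "\<And>y. y \<in> {u..v} \<Longrightarrow> norm (\<psi> y - \<psi> x - (y - x) *\<^sub>R g) \<le> e * \<bar>y - x\<bar>"
  shows "norm ((v - u) *\<^sub>R g - (\<psi> v - \<psi> u)) \<le> e * (v - u)"
proof -
  have "(v - u) *\<^sub>R g - (\<psi> v - \<psi> u) = (\<psi> u - \<psi> x - (u - x) *\<^sub>R g) - (\<psi> v - \<psi> x - (v - x) *\<^sub>R g)"
    by (simp add: algebra_simps)
  then have "norm ((v - u) *\<^sub>R g - (\<psi> v - \<psi> u))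
      \<le> norm (\<psi> u - \<psi> x - (u - x) *\<^sub>R g) + norm (\<psi> v - \<psi> x - (v - x) *\<^sub>R g)"
    by (metis norm_triangle_ineq4)
  also have "\<dots> \<le> e * \<bar>u - x\<bar> + e * \<bar>v - x\<bar>"
    using assms by (intro add_mono approx) auto
  also have "\<dots> = e * (v - u)" using assms by (simp add: algebra_simps)
  finally show ?thesis .
qed

lemma tagged_division_1_derivative_sum_le:
  fixes \<psi> g :: "real \<Rightarrow> 'a::real_normed_vector" and a b :: real
  assumes ab: "a \<le> b" and p: "p tagged_division_of {a..b}" and qp: "q \<subseteq> p" and e: "e \<ge> 0"
    and approx: "\<And>x K y. (x, K) \<in> q \<Longrightarrow> y \<in> K \<Longrightarrow> norm (\<psi> y - \<psi> x - (y - x) *\<^sub>R g x) \<le> e * \<bar>y - x\<bar>"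
  shows "(\<Sum>(x, K)\<in>q. norm (content K *\<^sub>R g x - (\<psi> (Sup K) - \<psi> (Inf K)))) \<le> e * (b - a)"
proof -
  note K = tagged_division_1_interval[OF p]
  have fin: "finite p" using p by (rule tagged_division_ofD(1))
  have "(\<Sum>(x, K)\<in>q. norm (content K *\<^sub>R g x - (\<psi> (Sup K) - \<psi> (Inf K)))) \<le> (\<Sum>(x, K)\<in>q. e * content K)"
  proof (rule sum_mono, clarify)
    fix x K assume xq: "(x, K) \<in> q"
    then have xK: "(x, K) \<in> p" using qp by blast
    have "norm ((Sup K - Inf K) *\<^sub>R g x - (\<psi> (Sup K) - \<psi> (Inf K))) \<le> e * (Sup K - Inf K)"
      using K(3,4)[OF xK] approx[OF xq] K(1)[OF xK] by (intro interval_increment_approx) auto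
    then show "norm (content K *\<^sub>R g x - (\<psi> (Sup K) - \<psi> (Inf K))) \<le> e * content K"
      by (simp add: K(6)[OF xK])
  qed
  also have "\<dots> \<le> (\<Sum>(x, K)\<in>p. e * content K)"
    using fin qp e by (intro sum_mono2) auto
  also have "\<dots> = e * (b - a)"
    using additive_content_tagged_division[of p a b] p ab
    by (simp add: sum_distrib_left[symmetric] case_prod_beta cbox_interval)
  finally show ?thesis .
qed

lemma negligible_small_open_cover:
  assumes "negligible E" "\<delta> > 0"
  obtains T where "open T" "E \<subseteq> T" "T \<in> lmeasurable" "measure lebesgue T < \<delta>"
proof -
  have E: "E \<in> null_sets lebesgue" using assms(1) negligible_iff_null_sets by blast
  then obtain T where T: "open T" "E \<subseteq> T" "T - E \<in> lmeasurable" "emeasure lebesgue (T - E) < ennreal \<delta>"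
    using sets_lebesgue_outer_open[of E \<delta>] assms(2) by auto
  have Tm: "T \<in> lmeasurable" by (meson E T(2,3) fmeasurableI_null_sets fmeasurable_Diff_D)
  have "measure lebesgue T = measure lebesgue (T - E)"
    using Tm E by (intro measure_Diff_null_set[symmetric]) auto
  also have "\<dots> < \<delta>" using T(3,4) assms(2) by (simp add: emeasure_eq_measure2 ennreal_less_iff)
  finally show ?thesis using that T(1,2) Tm by blast
qed

lemma abs_cont_has_integral_derivative:
  fixes \<psi> g :: "real \<Rightarrow> 'a::banach"
  assumes ab: "a \<le> b" and ac: "abs_cont_on \<psi> a b" and E: "negligible E"
    and der: "\<And>t. t \<in> {a..b} - E \<Longrightarrow> (\<psi> has_vector_derivative g t) (at t)"
  shows "(g has_integral (\<psi> b - \<psi> a)) {a..b}"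
proof -
  define g0 where "g0 t = (if t \<in> E then 0 else g t)" for t
  have "(g0 has_integral (\<psi> b - \<psi> a)) {a..b}"
    unfolding has_integral_real
  proof (intro allI impI)
    fix e :: real assume e: "e > 0"
    obtain \<delta> where \<delta>: "\<delta> > 0" and small: "\<And>p q. p tagged_division_of {a..b} \<Longrightarrow> q \<subseteq> p \<Longrightarrow>
        measure lebesgue (\<Union>(snd ` q)) < \<delta> \<Longrightarrow> (\<Sum>(x, K)\<in>q. norm (\<psi> (Sup K) - \<psi> (Inf K))) < e/2"
      using abs_cont_on_tagged_subdivision[OF ac, of "e/2"] e by auto
    obtain T where T: "open T" "E \<subseteq> T" "T \<in> lmeasurable" "measure lebesgue T < \<delta>"
      using negligible_small_open_cover[OF E \<delta>] .
    define e' where "e' = e / (2 * (b - a + 1))"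
    have e': "e' > 0" using e ab by (simp add: e'_def)
    \<comment> \<open>the gauge keeps tags in E inside T and is fine enough for the derivative elsewhere\<close>
    have "\<exists>d>0. (t \<in> E \<longrightarrow> ball t d \<subseteq> T) \<and> (t \<in> {a..b} - E \<longrightarrow>
            (\<forall>y. norm (y - t) < d \<longrightarrow> norm (\<psi> y - \<psi> t - (y - t) *\<^sub>R g t) \<le> e' * norm (y - t)))" for t
    proof (cases "t \<in> E")
      case True
      then show ?thesis using T(1,2) open_contains_ball by blast
    next
      case False
      show ?thesis
      proof (cases "t \<in> {a..b}")
        case True
        then have "(\<psi> has_derivative (\<lambda>h. h *\<^sub>R g t)) (at t)"
          using der False by (simp add: has_vector_derivative_def)
        then show ?thesis using e' False unfolding has_derivative_at_alt by blast
      qed (use False in \<open>auto intro: exI[of _ 1]\<close>)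
    qed
    then obtain d where d: "\<And>t. d t > 0" "\<And>t. t \<in> E \<Longrightarrow> ball t (d t) \<subseteq> T"
      "\<And>t y. t \<in> {a..b} - E \<Longrightarrow> norm (y - t) < d t \<Longrightarrow> norm (\<psi> y - \<psi> t - (y - t) *\<^sub>R g t) \<le> e' * norm (y - t)"
      by metis
    show "\<exists>\<gamma>. gauge \<gamma> \<and> (\<forall>\<D>. \<D> tagged_division_of {a..b} \<and> \<gamma> fine \<D> \<longrightarrow>
            norm ((\<Sum>(x, K)\<in>\<D>. content K *\<^sub>R g0 x) - (\<psi> b - \<psi> a)) < e)"
    proof (intro exI conjI allI impI)
      show "gauge (\<lambda>t. ball t (d t))" using d(1) by (intro gauge_ball_dependent) auto
      fix p assume "p tagged_division_of {a..b} \<and> (\<lambda>t. ball t (d t)) fine p"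
      then have p: "p tagged_division_of {a..b}" and fine: "(\<lambda>t. ball t (d t)) fine p" by auto
      note K = tagged_division_1_interval[OF p]
      have fin: "finite p" using p by (rule tagged_division_ofD(1))
      define pE where "pE = {xK \<in> p. fst xK \<in> E}"
      define pG where "pG = p - pE"
      define F where "F = (\<lambda>(x, K). content K *\<^sub>R g0 x - (\<psi> (Sup K) - \<psi> (Inf K)))"
      have "(\<Sum>(x, K)\<in>p. content K *\<^sub>R g0 x) - (\<psi> b - \<psi> a)
            = (\<Sum>(x, K)\<in>p. content K *\<^sub>R g0 x) - (\<Sum>(x, K)\<in>p. \<psi> (Sup K) - \<psi> (Inf K))"
        using additive_tagged_division_1[OF ab p, of \<psi>] by simp
      also have "\<dots> = sum F pE + sum F pG"
        unfolding F_def using fin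
        by (simp add: sum_subtractf case_prod_beta pG_def sum.subset_diff[of pE p] pE_def)
      finally have split: "(\<Sum>(x, K)\<in>p. content K *\<^sub>R g0 x) - (\<psi> b - \<psi> a) = sum F pE + sum F pG" .
      have "norm (sum F pG) \<le> (\<Sum>(x, K)\<in>pG. norm (content K *\<^sub>R g x - (\<psi> (Sup K) - \<psi> (Inf K))))"
        by (rule order_trans[OF norm_sum sum_mono]) (auto simp: F_def g0_def pG_def pE_def)
      also have "\<dots> \<le> e' * (b - a)"
      proof (rule tagged_division_1_derivative_sum_le[OF ab p])
        show "pG \<subseteq> p" "e' \<ge> 0" using e' by (auto simp: pG_def)
        fix x K y assume xK: "(x, K) \<in> pG" and y: "y \<in> K"
        then have "x \<in> {a..b} - E" "y \<in> ball x (d x)"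
          using K(2-5)[of x K] fineD[OF fine, of x K] by (auto simp: pG_def pE_def)
        then show "norm (\<psi> y - \<psi> x - (y - x) *\<^sub>R g x) \<le> e' * \<bar>y - x\<bar>"
          using d(3) by (simp add: dist_norm norm_minus_commute)
      qed
      also have "\<dots> < e / 2" using e ab by (simp add: e'_def field_simps)
      finally have good: "norm (sum F pG) < e / 2" .
      have "norm (sum F pE) \<le> (\<Sum>(x, K)\<in>pE. norm (\<psi> (Sup K) - \<psi> (Inf K)))"
        by (rule order_trans[OF norm_sum sum_mono]) (auto simp: F_def g0_def pE_def norm_minus_commute)
      also have "\<dots> < e / 2"
      proof (rule small[OF p])
        show "pE \<subseteq> p" by (auto simp: pE_def)
        have "\<Union>(snd ` pE) \<subseteq> T" using fineD[OF fine] d(2) by (fastforce simp: pE_def)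
        then have "measure lebesgue (\<Union>(snd ` pE)) \<le> measure lebesgue T"
          using fin K(8) T(3) by (intro measure_mono_fmeasurable) (auto simp: pE_def)
        then show "measure lebesgue (\<Union>(snd ` pE)) < \<delta>" using T(4) by simp
      qed
      finally show "norm ((\<Sum>(x, K)\<in>p. content K *\<^sub>R g0 x) - (\<psi> b - \<psi> a)) < e"
        unfolding split using good norm_triangle_ineq[of "sum F pE" "sum F pG"] by linarith
    qed
  qed
  then show ?thesis
    by (rule has_integral_spike[OF E, rotated]) (auto simp: g0_def)
qed

section \<open>The Lagrangian and its convex conjugate\<close>

lemma powr_dominates_linear:
  fixes K1 \<sigma> c :: real
  assumes K1: "K1 > 0" and \<sigma>: "\<sigma> > 1"
  obtains R where "R \<ge> 1" "\<And>r. r \<ge> R \<Longrightarrow> c * r \<le> K1 * r powr \<sigma>"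
proof -
  define R where "R = max 1 ((\<bar>c\<bar> / K1) powr (1 / (\<sigma> - 1)))"
  show ?thesis
  proof (rule that)
    show "R \<ge> 1" by (simp add: R_def)
    fix r assume r: "r \<ge> R"
    then have r1: "r \<ge> 1" by (simp add: R_def)
    have "\<bar>c\<bar> / K1 = ((\<bar>c\<bar> / K1) powr (1 / (\<sigma> - 1))) powr (\<sigma> - 1)"
      using K1 \<sigma> by (cases "c = 0") (simp_all add: powr_powr)
    also have "\<dots> \<le> r powr (\<sigma> - 1)"
      using r \<sigma> by (intro powr_mono2) (auto simp: R_def)
    finally have "\<bar>c\<bar> \<le> K1 * r powr (\<sigma> - 1)" using K1 by (simp add: field_simps)
    then have "c * r \<le> K1 * r powr (\<sigma> - 1) * r"
      using r1 by (intro mult_right_mono) auto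
    also have "\<dots> = K1 * r powr \<sigma>"
      using r1 by (simp add: powr_diff field_simps)
    finally show "c * r \<le> K1 * r powr \<sigma>" .
  qed
qed

lemma assm_L_coercive:
  fixes L :: "real^'d::finite \<Rightarrow> real^'m::finite \<Rightarrow> real"
  assumes "assm_L L"
  shows "\<exists>K1 K2 \<sigma>. K1 > 0 \<and> \<sigma> > 1 \<and> (\<forall>x u. L x u \<ge> K1 * norm u powr \<sigma> - K2)"
  using assms unfolding assm_L_def by (elim conjE)

lemma assm_L_superlinear:
  fixes L :: "real^'d::finite \<Rightarrow> real^'m::finite \<Rightarrow> real"
  assumes "assm_L L"
  shows "\<exists>R\<ge>1. \<forall>y v. R \<le> norm v \<longrightarrow> A * norm v \<le> L y v"
proof -
  obtain K1 K2 \<sigma> where K: "K1 > 0" "\<sigma> > 1" "\<And>x u. L x u \<ge> K1 * norm u powr \<sigma> - K2"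
    using assm_L_coercive[OF assms] by blast
  obtain R where R: "R \<ge> 1" "\<And>r. r \<ge> R \<Longrightarrow> (\<bar>A\<bar> + \<bar>K2\<bar>) * r \<le> K1 * r powr \<sigma>"
    using powr_dominates_linear[OF K(1,2), of "\<bar>A\<bar> + \<bar>K2\<bar>"] by blast
  have "A * norm v \<le> L y v" if v: "R \<le> norm v" for y v
  proof -
    have "A * norm v \<le> \<bar>A\<bar> * norm v" by (simp add: mult_right_mono)
    moreover have "\<bar>K2\<bar> \<le> \<bar>K2\<bar> * norm v" using v R(1) by (simp add: mult_le_cancel_left1)
    ultimately show ?thesis
      using R(2)[OF v] K(3)[where x=y and u=v] by (simp add: algebra_simps)
  qed
  then show ?thesis using R(1) by blast
qed

lemma assm_L_continuous:
  fixes L :: "real^'d::finite \<Rightarrow> real^'m::finite \<Rightarrow> real"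
  assumes "assm_L L"
  shows "continuous_on UNIV (\<lambda>z. L (fst z) (snd z))"
proof -
  obtain D1 :: "_ \<Rightarrow> _ \<Rightarrow>\<^sub>L real" where "\<And>z. ((\<lambda>(x, u). L x u) has_derivative blinfun_apply (D1 z)) (at z)"
    using assms unfolding assm_L_def by blast
  then have "continuous_on UNIV (\<lambda>(x, u). L x u)"
    by (intro has_derivative_continuous_on) auto
  then show ?thesis by (simp add: case_prod_beta')
qed

lemma assm_L_bdd_above:
  fixes L :: "real^'d::finite \<Rightarrow> real^'m::finite \<Rightarrow> real"
  assumes "assm_L L"
  shows "bdd_above (range (\<lambda>v. q \<bullet> v - L y v))"
proof -
  obtain K1 K2 \<sigma> where K: "K1 > 0" "\<And>x u. L x u \<ge> K1 * norm u powr \<sigma> - K2"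
    using assm_L_coercive[OF assms] by blast
  obtain R where R: "\<And>y v. R \<le> norm v \<Longrightarrow> norm q * norm v \<le> L y v"
    using assm_L_superlinear[OF assms, of "norm q"] by blast
  show ?thesis
  proof (rule bdd_aboveI2)
    fix v
    have "q \<bullet> v - L y v \<le> norm q * norm v - L y v"
      using norm_cauchy_schwarz[of q v] by linarith
    also have "\<dots> \<le> max 0 (norm q * R + K2)"
    proof (cases "R \<le> norm v")
      case True
      then show ?thesis using R[OF True, of y] by simp
    next
      case False
      then have "norm q * norm v \<le> norm q * R" by (intro mult_left_mono) auto
      moreover have "K1 * norm v powr \<sigma> \<ge> 0" using K(1) by simp
      ultimately show ?thesis using K(2)[where x=y and u=v] by linarith
    qed
    finally show "q \<bullet> v - L y v \<le> max 0 (norm q * R + K2)" .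
  qed
qed

lemma Lstar_upper:
  fixes L :: "real^'d::finite \<Rightarrow> real^'m::finite \<Rightarrow> real"
  assumes "assm_L L"
  shows "q \<bullet> v - L y v \<le> Lstar L y q"
  unfolding Lstar_def by (rule cSUP_upper[OF UNIV_I assm_L_bdd_above[OF assms]])

lemma Lstar_least:
  assumes "\<And>v. q \<bullet> v - L y v \<le> B"
  shows "Lstar L y q \<le> B"
  unfolding Lstar_def using assms by (intro cSUP_least) auto

lemma Lstar_negative_uniform_margin:
  fixes L :: "real^'d::finite \<Rightarrow> real^'m::finite \<Rightarrow> real"
  assumes L: "assm_L L" and neg: "c + Lstar L x q < 0"
  obtains \<rho> \<eta> \<delta> where "\<rho> > 0" "\<eta> > 0" "\<delta> > 0"
    "\<And>y q' v. norm (y - x) < \<rho> \<Longrightarrow> norm (q' - q) < \<rho> \<Longrightarrow> q' \<bullet> v + \<eta> * norm v + c + \<delta> \<le> L y v"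
proof -
  define \<delta> where "\<delta> = - (c + Lstar L x q) / 2"
  have \<delta>: "\<delta> > 0" using neg by (simp add: \<delta>_def)
  have Lx: "q \<bullet> v + c + 2 * \<delta> \<le> L x v" for v
    using Lstar_upper[OF L, of q v x] by (simp add: \<delta>_def field_simps)
  obtain R where R: "R \<ge> 1" "\<And>y v. R \<le> norm v \<Longrightarrow> (norm q + 2 + \<bar>c\<bar> + \<delta>) * norm v \<le> L y v"
    using assm_L_superlinear[OF L, of "norm q + 2 + \<bar>c\<bar> + \<delta>"] by blast
  define \<epsilon> where "\<epsilon> = \<delta> / (3 * (R + 1))"
  have \<epsilon>: "\<epsilon> > 0" using \<delta> R by (simp add: \<epsilon>_def)
  have "uniformly_continuous_on (cball x 1 \<times> cball 0 R) (\<lambda>z. L (fst z) (snd z))"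
    using assm_L_continuous[OF L]
    by (intro compact_uniformly_continuous) (auto intro: continuous_on_subset compact_Times)
  then obtain \<rho>1 where \<rho>1: "\<rho>1 > 0" and uc: "\<And>z z'. z \<in> cball x 1 \<times> cball 0 R \<Longrightarrow>
      z' \<in> cball x 1 \<times> cball 0 R \<Longrightarrow> dist z' z < \<rho>1 \<Longrightarrow> dist (L (fst z') (snd z')) (L (fst z) (snd z)) < \<delta>/3"
    unfolding uniformly_continuous_on_def using \<delta> by (metis divide_pos_pos zero_less_numeral)
  show ?thesis
  proof (rule that[of "min 1 (min \<rho>1 \<epsilon>)" "min 1 \<epsilon>"])
    show "min 1 (min \<rho>1 \<epsilon>) > 0" "min 1 \<epsilon> > 0" "\<delta> > 0" using \<rho>1 \<epsilon> \<delta> by auto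
    fix y q' v
    assume y: "norm (y - x) < min 1 (min \<rho>1 \<epsilon>)" and q': "norm (q' - q) < min 1 (min \<rho>1 \<epsilon>)"
    have qq: "q' \<bullet> v \<le> q \<bullet> v + norm (q' - q) * norm v"
      using norm_cauchy_schwarz[of "q' - q" v] by (simp add: inner_diff_left)
    show "q' \<bullet> v + min 1 \<epsilon> * norm v + c + \<delta> \<le> L y v"
    proof (cases "R \<le> norm v")
      case True
      \<comment> \<open>superlinearity of L dominates\<close>
      have "norm (q' - q) * norm v \<le> norm v" "min 1 \<epsilon> * norm v \<le> norm v" "\<bar>c\<bar> + \<delta> \<le> (\<bar>c\<bar> + \<delta>) * norm v"
        using q' True R(1) \<delta> \<epsilon> by (auto intro: mult_left_le_one_le simp: mult_le_cancel_left1)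
      then have "q' \<bullet> v + min 1 \<epsilon> * norm v + c + \<delta> \<le> (norm q + 2 + \<bar>c\<bar> + \<delta>) * norm v"
        using qq norm_cauchy_schwarz[of q v] by (simp add: algebra_simps)
      then show ?thesis using R(2)[OF True, of y] by linarith
    next
      case False
      \<comment> \<open>uniform continuity of L on a compact set\<close>
      have "(y, v) \<in> cball x 1 \<times> cball 0 R" "(x, v) \<in> cball x 1 \<times> cball 0 R"
        "dist (y, v) (x, v) < \<rho>1"
        using y False by (auto simp: dist_norm norm_minus_commute dist_Pair_Pair)
      then have "\<bar>L y v - L x v\<bar> < \<delta>/3" using uc[of "(x, v)" "(y, v)"] by (simp add: dist_real_def)
      then have "L x v - \<delta>/3 < L y v" by linarith
      moreover have "norm (q' - q) * norm v \<le> \<epsilon> * (R + 1)" "min 1 \<epsilon> * norm v \<le> \<epsilon> * (R + 1)"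
        using q' False \<epsilon> by (auto intro!: mult_mono)
      moreover have "\<epsilon> * (R + 1) = \<delta>/3" using R(1) by (simp add: \<epsilon>_def field_simps)
      ultimately show ?thesis using qq Lx[of v] by linarith
    qed
  qed
qed

section \<open>The matrix of the vector fields\<close>

lemma continuous_on_Fmat:
  assumes "assm_F f"
  shows "continuous_on UNIV (Fmat f)"
proof -
  obtain DF :: "_ \<Rightarrow> _ \<Rightarrow>\<^sub>L _" where "\<forall>x. (Fmat f has_derivative blinfun_apply (DF x)) (at x)"
    using assms unfolding assm_F_def by blast
  then show ?thesis by (intro has_derivative_continuous_on) auto
qed

lemma continuous_on_vector_field:
  assumes "assm_F f"
  shows "continuous_on UNIV (f j)"
proof -
  have "continuous_on UNIV (\<lambda>y. \<chi> i. Fmat f y $ i $ j)"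
    using continuous_on_Fmat[OF assms] by (intro continuous_on_vec_lambda continuous_on_component)
  moreover have "(\<lambda>y. \<chi> i. Fmat f y $ i $ j) = f j" by (simp add: Fmat_def vec_eq_iff)
  ultimately show ?thesis by metis
qed

lemma Fmat_mult_vec: "Fmat f y *v v = (\<Sum>j\<in>UNIV. v $ j *\<^sub>R f j y)"
  by (simp add: matrix_mult_sum column_def Fmat_def scalar_mult_eq_scaleR vec_eq_iff)

lemma transpose_Fmat_mult_vec: "transpose (Fmat f y) *v p = (\<chi> j. f j y \<bullet> p)"
  by (simp add: vec_eq_iff transpose_def matrix_vector_mult_def Fmat_def inner_vec_def mult.commute)

lemma inner_transpose_Fmat: "(transpose (Fmat f y) *v p) \<bullet> v = p \<bullet> (Fmat f y *v v)"
  by (simp add: transpose_matrix_vector dot_lmul_matrix)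

lemma continuous_on_transpose_Fmat_mult:
  fixes f :: "'m::finite \<Rightarrow> real^'d::finite \<Rightarrow> real^'d"
  assumes "assm_F f"
  shows "continuous_on UNIV (\<lambda>z. transpose (Fmat f (fst z)) *v snd z)"
proof -
  have "continuous_on UNIV (\<lambda>z :: (real^'d) \<times> (real^'d). f j (fst z))" for j
    by (rule continuous_on_compose2[OF continuous_on_vector_field[OF assms] continuous_on_fst[OF continuous_on_id]])
      simp
  then show ?thesis
    unfolding transpose_Fmat_mult_vec
    by (intro continuous_on_vec_lambda continuous_on_inner continuous_on_snd continuous_on_id)
qed

lemma Fmat_locally_bounded:
  assumes "assm_F f"
  obtains C where "C > 0" "\<And>y v. y \<in> cball x 1 \<Longrightarrow> norm (Fmat f y *v v) \<le> C * norm v"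
proof -
  define B where "B y = (\<Sum>j\<in>UNIV. norm (f j y))" for y
  have "continuous_on (cball x 1) B"
    unfolding B_def using continuous_on_vector_field[OF assms]
    by (intro continuous_intros) (auto intro: continuous_on_subset)
  then have "bounded (B ` cball x 1)"
    by (intro compact_imp_bounded compact_continuous_image) auto
  then obtain C where C: "\<And>y. y \<in> cball x 1 \<Longrightarrow> norm (B y) \<le> C"
    unfolding bounded_iff by blast
  show ?thesis
  proof (rule that[of "C + 1"])
    show "C + 1 > 0" using C[of x] norm_ge_zero[of "B x"] by simp
    fix y v assume y: "y \<in> cball x 1"
    have "norm (Fmat f y *v v) \<le> (\<Sum>j\<in>UNIV. norm (v $ j *\<^sub>R f j y))"
      unfolding Fmat_mult_vec by (rule norm_sum)
    also have "\<dots> \<le> B y * norm v"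
      unfolding B_def sum_distrib_right
      by (intro sum_mono) (simp add: mult.commute mult_right_mono component_le_norm_cart)
    also have "\<dots> \<le> (C + 1) * norm v"
      using C[OF y] by (intro mult_right_mono) auto
    finally show "norm (Fmat f y *v v) \<le> (C + 1) * norm v" .
  qed
qed

section \<open>Superdifferentials of viscosity subsolutions\<close>

lemma has_derivative_quadratic_test:
  "((\<lambda>y. p \<bullet> y + k * (norm (y - x))\<^sup>2) has_derivative (\<lambda>h. (p + (2 * k) *\<^sub>R (y - x)) \<bullet> h)) (at y)"
proof -
  have "((\<lambda>y. p \<bullet> y + k * (norm (y - x))\<^sup>2) has_derivative (\<lambda>h. p \<bullet> h + k * (2 * ((y - x) \<bullet> h)))) (at y)"
    unfolding power2_norm_eq_inner by (auto intro!: derivative_eq_intros simp: inner_commute)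
  then show ?thesis by (simp add: inner_add_left algebra_simps)
qed

lemma C1_fun_quadratic_test: "C1_fun (\<lambda>y. p \<bullet> y + k * (norm (y - x))\<^sup>2)"
  unfolding C1_fun_def
proof (intro exI conjI allI)
  fix y
  show "((\<lambda>y. p \<bullet> y + k * (norm (y - x))\<^sup>2) has_derivative
      blinfun_apply (blinfun_inner_left (p + (2 * k) *\<^sub>R (y - x)))) (at y)"
    using has_derivative_quadratic_test[of p k x y] by (simp add: inner_commute)
next
  show "continuous_on UNIV (\<lambda>y. blinfun_inner_left (p + (2 * k) *\<^sub>R (y - x)))"
    by (intro bounded_linear.continuous_on[OF bounded_linear_blinfun_inner_left] continuous_intros)
qed

lemma superdiff_touched_by_quadratic:
  fixes chi :: "real^'d::finite \<Rightarrow> real"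
  assumes chi: "continuous_on UNIV chi" and p: "p \<in> superdiff chi x" and \<epsilon>: "\<epsilon> > 0"
  obtains y k where "k > 0" "norm (y - x) \<le> \<epsilon>" "k * norm (y - x) \<le> \<epsilon>"
    "\<exists>r>0. \<forall>z. dist z y < r \<longrightarrow>
       chi z - (p \<bullet> z + k * (norm (z - x))\<^sup>2) \<le> chi y - (p \<bullet> y + k * (norm (y - x))\<^sup>2)"
proof -
  obtain r0 where r0: "r0 > 0"
    and sd: "\<And>y. norm (y - x) < r0 \<Longrightarrow> chi y - chi x - p \<bullet> (y - x) \<le> \<epsilon> * norm (y - x)"
    using p \<epsilon> unfolding superdiff_def by blast
  define r where "r = min r0 \<epsilon>"
  have r: "r > 0" "r \<le> r0" "r \<le> \<epsilon>" using r0 \<epsilon> by (auto simp: r_def)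
  define k where "k = 4 * \<epsilon> / r"
  define \<psi> where "\<psi> z = chi z - (p \<bullet> z + k * (norm (z - x))\<^sup>2)" for z
  have "continuous_on UNIV \<psi>"
    unfolding \<psi>_def using chi by (intro continuous_intros)
  then have "continuous_on (cball x (r/2)) \<psi>" by (rule continuous_on_subset) simp
  then obtain y where y: "y \<in> cball x (r/2)" and ymax: "\<And>z. z \<in> cball x (r/2) \<Longrightarrow> \<psi> z \<le> \<psi> y"
    using continuous_attains_sup[OF compact_cball] r by (metis centre_in_cball empty_iff half_gt_zero less_le)
  \<comment> \<open>the superdifferential inequality pulls the maximiser towards x\<close>
  have "k * (norm (y - x))\<^sup>2 \<le> chi y - chi x - p \<bullet> (y - x)"
    using ymax[of x] r by (simp add: \<psi>_def inner_diff_right)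
  also have "\<dots> \<le> \<epsilon> * norm (y - x)"
    using y r by (intro sd) (simp add: dist_norm norm_minus_commute)
  finally have "(k * norm (y - x)) * norm (y - x) \<le> \<epsilon> * norm (y - x)"
    by (simp add: power2_eq_square mult.assoc)
  then have ky: "k * norm (y - x) \<le> \<epsilon>"
    using \<epsilon> by (cases "y = x") (auto simp: mult_le_cancel_right)
  then have near: "norm (y - x) \<le> r/4"
    using r \<epsilon> by (simp add: k_def field_simps)
  show ?thesis
  proof (rule that)
    show "k > 0" "norm (y - x) \<le> \<epsilon>" "k * norm (y - x) \<le> \<epsilon>"
      using near r ky \<epsilon> by (auto simp: k_def)
    have "\<psi> z \<le> \<psi> y" if "dist z y < r/4" for z
      using that near norm_triangle_ineq[of "z - y" "y - x"]
      by (intro ymax) (simp add: dist_norm norm_minus_commute)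
    then show "\<exists>\<rho>>0. \<forall>z. dist z y < \<rho> \<longrightarrow>
       chi z - (p \<bullet> z + k * (norm (z - x))\<^sup>2) \<le> chi y - (p \<bullet> y + k * (norm (y - x))\<^sup>2)"
      using r by (intro exI[of _ "r/4"]) (auto simp: \<psi>_def)
  qed
qed

lemma visc_subsol_superdiff_approx:
  fixes chi :: "real^'d::finite \<Rightarrow> real"
  assumes sub: "visc_subsol c H chi" and p: "p \<in> superdiff chi x" and \<epsilon>: "\<epsilon> > 0"
  obtains y p' where "norm (y - x) \<le> \<epsilon>" "norm (p' - p) \<le> 2 * \<epsilon>" "c + H y p' \<le> 0"
proof -
  have chi: "continuous_on UNIV chi"
    and test: "\<And>\<phi> y q. C1_fun \<phi> \<Longrightarrow> (\<phi> has_derivative (\<lambda>h. q \<bullet> h)) (at y) \<Longrightarrow>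
        (\<exists>r>0. \<forall>z. dist z y < r \<longrightarrow> chi z - \<phi> z \<le> chi y - \<phi> y) \<Longrightarrow> c + H y q \<le> 0"
    using sub unfolding visc_subsol_def by blast+
  obtain y k where y: "k > 0" "norm (y - x) \<le> \<epsilon>" "k * norm (y - x) \<le> \<epsilon>"
    and max: "\<exists>r>0. \<forall>z. dist z y < r \<longrightarrow>
       chi z - (p \<bullet> z + k * (norm (z - x))\<^sup>2) \<le> chi y - (p \<bullet> y + k * (norm (y - x))\<^sup>2)"
    by (rule superdiff_touched_by_quadratic[OF chi p \<epsilon>])
  have sol: "c + H y (p + (2 * k) *\<^sub>R (y - x)) \<le> 0"
    by (rule test[OF C1_fun_quadratic_test has_derivative_quadratic_test max])
  have "norm ((p + (2 * k) *\<^sub>R (y - x)) - p) \<le> 2 * \<epsilon>"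
    using y(1,3) by simp
  then show ?thesis by (rule that[OF y(2) _ sol])
qed

lemma visc_subsol_superdiff_Lstar_le:
  fixes f :: "'m::finite \<Rightarrow> real^'d::finite \<Rightarrow> real^'d" and L :: "real^'d \<Rightarrow> real^'m \<Rightarrow> real"
  assumes F: "assm_F f" and L: "assm_L L" and sub: "visc_subsol c (Ham f L) chi"
    and p: "p \<in> superdiff chi x"
  shows "c + Lstar L x (transpose (Fmat f x) *v p) \<le> 0"
proof -
  have "(transpose (Fmat f x) *v p) \<bullet> v - L x v \<le> - c" for v
  proof (rule ccontr)
    define G where "G z = c + (transpose (Fmat f (fst z)) *v snd z) \<bullet> v - L (fst z) v"
      for z :: "(real^'d) \<times> (real^'d)"
    assume "\<not> (transpose (Fmat f x) *v p) \<bullet> v - L x v \<le> - c"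
    then have pos: "G (x, p) > 0" by (simp add: G_def)
    have "continuous_on UNIV (\<lambda>z :: (real^'d) \<times> (real^'d). (fst z, v))"
      by (intro continuous_intros)
    from continuous_on_compose2[OF assm_L_continuous[OF L] this]
    have "continuous_on UNIV (\<lambda>z :: (real^'d) \<times> (real^'d). L (fst z) v)" by simp
    then have "continuous_on UNIV G"
      unfolding G_def using continuous_on_transpose_Fmat_mult[OF F] by (intro continuous_intros)
    then obtain \<zeta> where \<zeta>: "\<zeta> > 0" and near: "\<And>z. dist z (x, p) < \<zeta> \<Longrightarrow> G z > 0"
      using pos unfolding continuous_on_eq_continuous_at[OF open_UNIV] continuous_at_eps_delta
      by (metis UNIV_I dist_real_def abs_diff_less_iff diff_self)
    obtain y p' where y: "norm (y - x) \<le> \<zeta>/4" and p': "norm (p' - p) \<le> 2 * (\<zeta>/4)"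
      and sol: "c + Ham f L y p' \<le> 0"
      using visc_subsol_superdiff_approx[OF sub p, of "\<zeta>/4"] \<zeta> by auto
    have "dist (y, p') (x, p) \<le> dist y x + dist p' p"
      unfolding dist_Pair_Pair by (rule sqrt_sum_squares_le_sum) auto
    also have "\<dots> < \<zeta>" using y p' \<zeta> by (simp add: dist_norm)
    finally have "G (y, p') > 0" by (rule near)
    moreover have "(transpose (Fmat f y) *v p') \<bullet> v - L y v \<le> Ham f L y p'"
      unfolding Ham_def by (rule Lstar_upper[OF L])
    ultimately show False using sol by (simp add: G_def)
  qed
  then show ?thesis using Lstar_least[of "transpose (Fmat f x) *v p" L x "- c"] by simp
qed

section \<open>Calibrated curves\<close>

lemma tc_pair_has_integral:
  assumes pair: "tc_pair f UNIV \<gamma> u" and ab: "a \<le> b"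
  shows "((\<lambda>s. Fmat f (\<gamma> s) *v u s) has_integral (\<gamma> b - \<gamma> a)) {a..b}"
proof -
  obtain N where N: "{t \<in> space lebesgue. \<not> (t \<in> UNIV \<longrightarrow>
      (\<gamma> has_vector_derivative (Fmat f (\<gamma> t) *v u t)) (at t))} \<subseteq> N"
      "emeasure lebesgue N = 0" "N \<in> sets lebesgue"
    using pair unfolding tc_pair_def by (auto elim!: AE_E)
  show ?thesis
  proof (rule abs_cont_has_integral_derivative[OF ab])
    show "abs_cont_on \<gamma> a b" using pair by (simp add: tc_pair_def loc_abs_cont_def)
    show "negligible N" using N(2,3) by (simp add: negligible_iff_null_sets null_sets_def)
    show "(\<gamma> has_vector_derivative Fmat f (\<gamma> t) *v u t) (at t)" if "t \<in> {a..b} - N" for t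
      using N(1) that by auto
  qed
qed

lemma L2_loc_norm_integrable_on:
  assumes u: "L2_loc u I" and ab: "{a..b} \<subseteq> I"
  shows "(\<lambda>t. norm (u t)) integrable_on {a..b}"
proof (rule measurable_bounded_by_integrable_imp_integrable_real)
  have "u \<in> borel_measurable (lebesgue_on {a..b})"
    using u ab by (auto simp: L2_loc_def intro: measurable_restrict_mono)
  then show "(\<lambda>t. norm (u t)) \<in> borel_measurable (lebesgue_on {a..b})" by measurable
  have "integrable (lebesgue_on {a..b}) (\<lambda>t. norm (u t) ^ 2)"
    using u ab by (simp add: L2_loc_def)
  then show "(\<lambda>t. 1 + norm (u t) ^ 2) integrable_on {a..b}"
    by (intro integrable_add integrable_on_const) (auto dest: has_integral_integral_lebesgue_on)
  show "\<bar>norm (u t)\<bar> \<le> 1 + norm (u t) ^ 2" for t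
  proof -
    have "0 \<le> (norm (u t) - 1) ^ 2" by simp
    then have "2 * norm (u t) \<le> norm (u t) ^ 2 + 1" by (simp add: power2_diff)
    then show ?thesis using norm_ge_zero[of "u t"] by linarith
  qed
qed auto

lemma tc_pair_displacement_le:
  assumes pair: "tc_pair f UNIV \<gamma> u" and ab: "a \<le> b"
    and bound: "\<And>s v. s \<in> {a..b} \<Longrightarrow> norm (Fmat f (\<gamma> s) *v v) \<le> C * norm v"
  shows "norm (\<gamma> b - \<gamma> a) \<le> C * integral {a..b} (\<lambda>t. norm (u t))"
proof -
  have hig: "((\<lambda>s. Fmat f (\<gamma> s) *v u s) has_integral (\<gamma> b - \<gamma> a)) {a..b}"
    by (rule tc_pair_has_integral[OF pair ab])
  have "(\<lambda>t. norm (u t)) integrable_on {a..b}"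
    using pair by (intro L2_loc_norm_integrable_on) (auto simp: tc_pair_def)
  then have "norm (\<gamma> b - \<gamma> a) \<le> integral {a..b} (\<lambda>s. C * norm (u s))"
    unfolding integral_unique[OF hig, symmetric]
    by (intro integral_norm_bound_integral has_integral_integrable[OF hig] integrable_on_mult_right bound)
  then show ?thesis by simp
qed

lemma calibrated_has_integral:
  assumes cal: "calibrated f L chi I \<gamma> u" and "a \<in> I" "b \<in> I" "a < b"
  shows "((\<lambda>s. L (\<gamma> s) (u s)) has_integral (chi (\<gamma> b) - chi (\<gamma> a) + crit_const f L * (b - a))) {a..b}"
proof -
  have "action L \<gamma> u a b = ereal (chi (\<gamma> b) - chi (\<gamma> a) + crit_const f L * (b - a))"
    using cal assms by (simp add: calibrated_def)
  then have int: "integrable (lebesgue_on {a..b}) (\<lambda>s. L (\<gamma> s) (u s))"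
    and val: "integral\<^sup>L (lebesgue_on {a..b}) (\<lambda>s. L (\<gamma> s) (u s)) = chi (\<gamma> b) - chi (\<gamma> a) + crit_const f L * (b - a)"
    by (auto simp: action_def split: if_splits)
  show ?thesis using has_integral_integral_lebesgue_on[OF int] val by simp
qed

lemma calibrated_increment_ge:
  assumes pair: "tc_pair f UNIV \<gamma> u" and cal: "calibrated f L chi UNIV \<gamma> u" and ab: "a < b"
    and margin: "\<And>s. s \<in> {a..b} \<Longrightarrow>
      (transpose (Fmat f (\<gamma> s)) *v p) \<bullet> u s + \<eta> * norm (u s) + crit_const f L + \<delta> \<le> L (\<gamma> s) (u s)"
  shows "p \<bullet> (\<gamma> b - \<gamma> a) + \<eta> * integral {a..b} (\<lambda>t. norm (u t)) + \<delta> * (b - a) \<le> chi (\<gamma> b) - chi (\<gamma> a)"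
proof -
  define c where "c = crit_const f L"
  have "(\<lambda>t. norm (u t)) integrable_on {a..b}"
    using pair by (intro L2_loc_norm_integrable_on) (auto simp: tc_pair_def)
  then have hiu: "((\<lambda>t. norm (u t)) has_integral integral {a..b} (\<lambda>t. norm (u t))) {a..b}"
    by (rule integrable_integral)
  have "p \<bullet> (\<gamma> b - \<gamma> a) + \<eta> * integral {a..b} (\<lambda>t. norm (u t)) + (c + \<delta>) * (b - a)
      \<le> chi (\<gamma> b) - chi (\<gamma> a) + c * (b - a)"
  proof (rule has_integral_le)
    show "((\<lambda>s. p \<bullet> (Fmat f (\<gamma> s) *v u s) + \<eta> * norm (u s) + (c + \<delta>)) has_integral
        (p \<bullet> (\<gamma> b - \<gamma> a) + \<eta> * integral {a..b} (\<lambda>t. norm (u t)) + (c + \<delta>) * (b - a))) {a..b}"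
      using has_integral_linear[OF tc_pair_has_integral[OF pair] bounded_linear_inner_right[of p]] ab
        has_integral_const_real[of "c + \<delta>" a b]
      by (intro has_integral_add has_integral_mult_right hiu) (auto simp: o_def mult.commute)
    show "((\<lambda>s. L (\<gamma> s) (u s)) has_integral (chi (\<gamma> b) - chi (\<gamma> a) + c * (b - a))) {a..b}"
      using calibrated_has_integral[OF cal _ _ ab] by (simp add: c_def)
    show "p \<bullet> (Fmat f (\<gamma> s) *v u s) + \<eta> * norm (u s) + (c + \<delta>) \<le> L (\<gamma> s) (u s)" if "s \<in> {a..b}" for s
      using margin[OF that] unfolding inner_transpose_Fmat c_def by linarith
  qed
  then show ?thesis by (simp add: algebra_simps)
qed

lemma calibrated_superdiff_Lstar_ge:
  fixes f :: "'m::finite \<Rightarrow> real^'d::finite \<Rightarrow> real^'d" and L :: "real^'d \<Rightarrow> real^'m \<Rightarrow> real"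
  assumes F: "assm_F f" and L: "assm_L L" and pair: "tc_pair f UNIV \<gamma> u"
    and cal: "calibrated f L chi UNIV \<gamma> u" and p: "p \<in> superdiff chi (\<gamma> \<tau>)"
  shows "crit_const f L + Lstar L (\<gamma> \<tau>) (transpose (Fmat f (\<gamma> \<tau>)) *v p) \<ge> 0"
proof (rule ccontr)
  define c where "c = crit_const f L"
  define x where "x = \<gamma> \<tau>"
  define q where "q = transpose (Fmat f x) *v p"
  assume "\<not> ?thesis"
  then have "c + Lstar L x q < 0" by (simp add: c_def x_def q_def)
  then obtain \<rho> \<eta> \<delta> where \<rho>: "\<rho> > 0" and \<eta>: "\<eta> > 0" and \<delta>: "\<delta> > 0"
    and margin: "\<And>y q' v. norm (y - x) < \<rho> \<Longrightarrow> norm (q' - q) < \<rho> \<Longrightarrow> q' \<bullet> v + \<eta> * norm v + c + \<delta> \<le> L y v"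
    using Lstar_negative_uniform_margin[OF L] by blast
  obtain C where C: "C > 0" and Cb: "\<And>y v. y \<in> cball x 1 \<Longrightarrow> norm (Fmat f y *v v) \<le> C * norm v"
    using Fmat_locally_bounded[OF F] by blast
  have "\<eta> / C > 0" using \<eta> C by simp
  then obtain r1 where r1: "r1 > 0"
    and sd: "\<And>y. norm (y - x) < r1 \<Longrightarrow> chi y - chi x - p \<bullet> (y - x) \<le> (\<eta> / C) * norm (y - x)"
    using p unfolding superdiff_def x_def by blast
  have "isCont (\<lambda>y. transpose (Fmat f y) *v p) x"
    using continuous_on_compose2[OF continuous_on_transpose_Fmat_mult[OF F], of UNIV "\<lambda>y. (y, p)"]
    by (simp add: continuous_on_eq_continuous_at)
  then obtain r2 where r2: "r2 > 0" and qc: "\<And>y. dist y x < r2 \<Longrightarrow> dist (transpose (Fmat f y) *v p) q < \<rho>"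
    unfolding continuous_at_eps_delta q_def using \<rho> by blast
  define r where "r = min (min \<rho> r2) (min r1 1)"
  have r: "r > 0" using \<rho> r1 r2 by (simp add: r_def)
  have "isCont \<gamma> \<tau>"
    using loc_abs_cont_imp_continuous_on pair by (auto simp: tc_pair_def continuous_on_eq_continuous_at)
  then obtain h where h: "h > 0" and hc: "\<And>s. dist s \<tau> < h \<Longrightarrow> dist (\<gamma> s) x < r"
    unfolding continuous_at_eps_delta x_def using r by blast
  define b where "b = \<tau> + h/2"
  have tb: "\<tau> < b" using h by (simp add: b_def)
  have near: "norm (\<gamma> s - x) < r" if "s \<in> {\<tau>..b}" for s
    using hc[of s] that h by (simp add: b_def dist_norm dist_real_def)
  define I where "I = integral {\<tau>..b} (\<lambda>t. norm (u t))"
  have "(transpose (Fmat f (\<gamma> s)) *v p) \<bullet> u s + \<eta> * norm (u s) + c + \<delta> \<le> L (\<gamma> s) (u s)"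
    if "s \<in> {\<tau>..b}" for s
  proof (rule margin)
    show "norm (\<gamma> s - x) < \<rho>" using near[OF that] by (simp add: r_def)
    show "norm (transpose (Fmat f (\<gamma> s)) *v p - q) < \<rho>"
      using qc[of "\<gamma> s"] near[OF that] by (simp add: r_def dist_norm)
  qed
  then have "p \<bullet> (\<gamma> b - x) + \<eta> * I + \<delta> * (b - \<tau>) \<le> chi (\<gamma> b) - chi x"
    unfolding x_def I_def c_def by (rule calibrated_increment_ge[OF pair cal tb])
  \<comment> \<open>the superdifferential bounds the same increment by the arc length\<close>
  moreover have "chi (\<gamma> b) - chi x - p \<bullet> (\<gamma> b - x) \<le> \<eta> * I"
  proof -
    have "norm (Fmat f (\<gamma> s) *v v) \<le> C * norm v" if "s \<in> {\<tau>..b}" for s v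
      using Cb[of "\<gamma> s" v] near[OF that] by (simp add: r_def dist_norm norm_minus_commute)
    then have "norm (\<gamma> b - x) \<le> C * I"
      unfolding x_def I_def using tb by (intro tc_pair_displacement_le[OF pair]) auto
    then have "(\<eta> / C) * norm (\<gamma> b - x) \<le> \<eta> * I"
      using \<eta> C by (simp add: field_simps)
    moreover have "norm (\<gamma> b - x) < r1" using near[of b] tb by (simp add: r_def)
    ultimately show ?thesis using sd by fastforce
  qed
  moreover have "\<delta> * (b - \<tau>) > 0" using \<delta> tb by simp
  ultimately show False by linarith
qed

text \<open>Only (F), (L), the subsolution property and the calibration are used.\<close>

theorem proposition3p12:
  fixes f :: "'m::finite \<Rightarrow> real^'d::finite \<Rightarrow> real^'d"
    and L :: "real^'d \<Rightarrow> real^'m \<Rightarrow> real"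
    and chi :: "real^'d \<Rightarrow> real"
    and \<gamma> :: "real \<Rightarrow> real^'d"
    and u :: "real \<Rightarrow> real^'m"
  assumes m_le_d: "CARD('m) \<le> CARD('d)"
    and smooth: "\<forall>j. smooth_vf (f j)"
    and periodic: "\<forall>j. torus_periodic (f j)"
    and hoer: "hoermander f"
    and F: "assm_F f"
    and L: "assm_L L"
    and S: "assm_S f L"
    and chi_per: "torus_periodic chi"
    and sub: "visc_subsol (crit_const f L) (Ham f L) chi"
    and pair: "tc_pair f UNIV \<gamma> u"
    and cal: "calibrated f L chi UNIV \<gamma> u"
  shows "\<forall>\<tau>>0. \<forall>q \<in> superdiff_F f chi (\<gamma> \<tau>). crit_const f L + Lstar L (\<gamma> \<tau>) q = 0"
proof (intro allI impI ballI)
  fix \<tau> :: real and q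
  assume "q \<in> superdiff_F f chi (\<gamma> \<tau>)"
  then obtain p where p: "p \<in> superdiff chi (\<gamma> \<tau>)" and q: "q = transpose (Fmat f (\<gamma> \<tau>)) *v p"
    unfolding superdiff_F_def by blast
  show "crit_const f L + Lstar L (\<gamma> \<tau>) q = 0"
    using visc_subsol_superdiff_Lstar_le[OF F L sub p] calibrated_superdiff_Lstar_ge[OF F L pair cal p]
    unfolding q by linarith
qed

end
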